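(* Let $d\ge1$. Every $d$-dimensional lattice polytope $P\subseteq\mathbb{R}^d$ with $\mathrm{width}(P)\ge 2\,\mathrm{Flt}(d)\,d$ is spanning.
   Context: A lattice polytope is the convex hull of finitely many points of $\mathbb{Z}^d$. It is spanning if every point of $\mathbb{Z}^d$ is an affine integral combination of lattice points of $P$. $\mathrm{width}(P)=\min_{u\in(\mathbb{Z}^d)^*\setminus\{0\}}\max_{x,y\in P}|u(x)-u(y)|$, and $\mathrm{Flt}(d)=\sup\{\mathrm{width}(K): K\subseteq\mathbb{R}^d \text{ non-empty compact convex}, K\cap\mathbb{Z}^d=\emptyset\}$. *)

theory Defs
  imports "HOL-Analysis.Analysis" "HOL-Library.Extended_Real"
begin

text \<open>The integer lattice Z^d inside R^d = real^'n (d = CARD('n)).\<close>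
definition lattice :: "(real^'n) set" where
  "lattice = {x. \<forall>i. x $ i \<in> \<int>}"

definition lattice_polytope :: "(real^'n) set \<Rightarrow> bool" where
  "lattice_polytope P \<longleftrightarrow> (\<exists>S. finite S \<and> S \<subseteq> lattice \<and> P = convex hull S)"

definition spanning :: "(real^'n) set \<Rightarrow> bool" where
  "spanning P \<longleftrightarrow> (\<forall>z\<in>lattice. \<exists>T c. finite T \<and> T \<subseteq> P \<inter> lattice \<and>
      (\<Sum>x\<in>T. c x) = (1::int) \<and> (\<Sum>x\<in>T. of_int (c x) *\<^sub>R x) = z)"

definition lattice_width :: "(real^'n) set \<Rightarrow> real" where
  "lattice_width K = Inf {Sup {\<bar>u \<bullet> x - u \<bullet> y\<bar> | x y. x \<in> K \<and> y \<in> K} | u.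
       u \<in> lattice \<and> u \<noteq> 0}"

definition Flt :: "'n::finite itself \<Rightarrow> ereal" where
  "Flt _ = Sup {ereal (lattice_width K) | K :: (real^'n) set.
       K \<noteq> {} \<and> compact K \<and> convex K \<and> K \<inter> lattice = {}}"

end

theory Submission
  imports Defs
begin

text \<open>Let \<open>x\<^sub>0\<close> be a lattice point of \<open>P\<close> and \<open>k = d/2\<close>. The lattice vectors \<open>z\<close> with
  \<open>x\<^sub>0 + k z \<in> P\<close> span \<open>\<real>\<^sup>d\<close>: otherwise a functional \<open>h \<noteq> 0\<close> vanishes on all of them; if \<open>h\<close>
  is maximised on \<open>P\<close> at \<open>p\<close> and \<open>x\<^sub>0\<close> lies in the lower half of \<open>P\<close> in direction \<open>h\<close>, then
  \<open>(5/8 p + 3/8 P - x\<^sub>0) / k\<close> is a lattice-free convex body of width \<open>3/(8k) \<cdot> width P > Flt(d)\<close>.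
  So \<open>P\<close> contains \<open>x\<^sub>0 + k \<cdot> conv (0, W)\<close> for a basis \<open>W\<close> of lattice vectors. A lattice point is
  \<open>x\<^sub>0\<close> plus an integer combination of \<open>W\<close> plus a lattice vector \<open>\<Sum> l\<^sub>w w\<close> with \<open>0 \<le> l\<^sub>w \<le> 1\<close>,
  and as \<open>|W| = 2k\<close> either \<open>\<Sum> l\<^sub>w \<le> k\<close> or \<open>\<Sum> (1 - l\<^sub>w) \<le> k\<close>; in both cases the fractional part is
  reached from lattice points of \<open>P\<close>. In dimension one, \<open>P\<close> is a segment between two lattice points
  and the same reduction applies with \<open>k = 1\<close>.\<close>

lemma lattice_add: "x \<in> lattice \<Longrightarrow> y \<in> lattice \<Longrightarrow> x + y \<in> lattice"
  by (auto simp: lattice_def)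

lemma lattice_diff: "x \<in> lattice \<Longrightarrow> y \<in> lattice \<Longrightarrow> x - y \<in> lattice"
  by (auto simp: lattice_def)

lemma lattice_scaleR_of_int: "x \<in> lattice \<Longrightarrow> of_int n *\<^sub>R x \<in> lattice"
  by (auto simp: lattice_def)

lemma lattice_sum: "(\<And>w. w \<in> W \<Longrightarrow> f w \<in> lattice) \<Longrightarrow> sum f W \<in> lattice"
  by (induction W rule: infinite_finite_induct) (auto simp: lattice_def)

lemma lattice_nonzero_norm_ge_1:
  assumes "u \<in> lattice" "u \<noteq> 0"
  shows "1 \<le> norm u"
proof -
  obtain i where "u $ i \<noteq> 0" using assms(2) by (metis vec_eq_iff zero_index)
  moreover have "u $ i \<in> \<int>" using assms(1) by (simp add: lattice_def)
  ultimately have "1 \<le> \<bar>u $ i\<bar>" by (simp add: Ints_nonzero_abs_ge1)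
  then show ?thesis using component_le_norm_cart[of u i] by linarith
qed

lemma lattice_has_nonzero: "\<exists>u::real^'n. u \<in> lattice \<and> u \<noteq> 0"
proof -
  obtain i :: 'n where True by simp
  have "axis i (1::real) \<in> lattice" by (auto simp: lattice_def axis_def)
  moreover have "axis i (1::real) \<noteq> 0" by (simp add: axis_eq_0_iff)
  ultimately show ?thesis by blast
qed

definition lattice_affine_hull :: "(real^'n) set \<Rightarrow> (real^'n) set" where
  "lattice_affine_hull P = {z. \<exists>T c. finite T \<and> T \<subseteq> P \<inter> lattice \<and>
      (\<Sum>x\<in>T. c x) = (1::int) \<and> (\<Sum>x\<in>T. of_int (c x) *\<^sub>R x) = z}"

lemma spanning_iff_lattice_subset: "spanning P \<longleftrightarrow> lattice \<subseteq> lattice_affine_hull P"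
  by (auto simp: spanning_def lattice_affine_hull_def)

lemma lattice_affine_hull_base: "x \<in> P \<Longrightarrow> x \<in> lattice \<Longrightarrow> x \<in> lattice_affine_hull P"
  unfolding lattice_affine_hull_def
  by (intro CollectI exI[of _ "{x}"] exI[of _ "\<lambda>_. 1"]) auto

lemma lattice_affine_hull_affine:
  assumes "a \<in> lattice_affine_hull P" "b \<in> lattice_affine_hull P" "e \<in> lattice_affine_hull P"
  shows "a + b - e \<in> lattice_affine_hull P"
proof -
  obtain Ta ca where a: "finite Ta" "Ta \<subseteq> P \<inter> lattice" "(\<Sum>x\<in>Ta. ca x) = (1::int)"
      "(\<Sum>x\<in>Ta. of_int (ca x) *\<^sub>R x) = a"
    using assms(1) unfolding lattice_affine_hull_def by blast
  obtain Tb cb where b: "finite Tb" "Tb \<subseteq> P \<inter> lattice" "(\<Sum>x\<in>Tb. cb x) = (1::int)"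
      "(\<Sum>x\<in>Tb. of_int (cb x) *\<^sub>R x) = b"
    using assms(2) unfolding lattice_affine_hull_def by blast
  obtain Te ce where e: "finite Te" "Te \<subseteq> P \<inter> lattice" "(\<Sum>x\<in>Te. ce x) = (1::int)"
      "(\<Sum>x\<in>Te. of_int (ce x) *\<^sub>R x) = e"
    using assms(3) unfolding lattice_affine_hull_def by blast
  define T where "T = Ta \<union> Tb \<union> Te"
  have fT: "finite T" using a b e by (simp add: T_def)
  have sub: "Ta \<subseteq> T" "Tb \<subseteq> T" "Te \<subseteq> T" by (auto simp: T_def)
  have restrict: "(\<Sum>x\<in>T. if x \<in> U then g x else 0) = sum g U" if "U \<subseteq> T" for U and g :: "_ \<Rightarrow> 'b::comm_monoid_add"
    using sum.inter_restrict[OF fT, of g U] that by (simp add: Int_absorb1)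
  define c where "c x = (if x \<in> Ta then ca x else 0) + (if x \<in> Tb then cb x else 0)
      - (if x \<in> Te then ce x else 0)" for x
  have "(\<Sum>x\<in>T. c x) = 1"
    using a b e unfolding c_def sum.distrib sum_subtractf by (simp add: restrict sub)
  moreover have "(\<Sum>x\<in>T. of_int (c x) *\<^sub>R x) = a + b - e"
  proof -
    have split: "of_int (c x) *\<^sub>R x = (if x \<in> Ta then of_int (ca x) *\<^sub>R x else 0)
        + (if x \<in> Tb then of_int (cb x) *\<^sub>R x else 0) - (if x \<in> Te then of_int (ce x) *\<^sub>R x else 0)" for x
      by (simp add: c_def scaleR_left_distrib scaleR_left_diff_distrib)
    show ?thesis
      using a b e unfolding split sum.distrib sum_subtractf by (simp add: restrict sub)
  qed
  moreover have "T \<subseteq> P \<inter> lattice" using a b e by (auto simp: T_def)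
  ultimately show ?thesis using fT unfolding lattice_affine_hull_def by blast
qed

lemma lattice_affine_hull_translate_add:
  assumes "x0 \<in> lattice_affine_hull P" "x0 + g \<in> lattice_affine_hull P" "x0 + h \<in> lattice_affine_hull P"
  shows "x0 + (g + h) \<in> lattice_affine_hull P"
  using lattice_affine_hull_affine[OF assms(2,3,1)] by (simp add: algebra_simps)

lemma lattice_affine_hull_translate_diff:
  assumes "x0 \<in> lattice_affine_hull P" "x0 + g \<in> lattice_affine_hull P" "x0 + h \<in> lattice_affine_hull P"
  shows "x0 + (g - h) \<in> lattice_affine_hull P"
  using lattice_affine_hull_affine[OF assms(2,1,3)] by (simp add: algebra_simps)

lemma lattice_affine_hull_translate_of_nat:
  assumes "x0 \<in> lattice_affine_hull P" "x0 + g \<in> lattice_affine_hull P"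
  shows "x0 + of_nat n *\<^sub>R g \<in> lattice_affine_hull P"
proof (induction n)
  case 0
  then show ?case using assms by simp
next
  case (Suc n)
  then show ?case
    using lattice_affine_hull_translate_add[OF assms(1) Suc assms(2)] by (simp add: algebra_simps)
qed

lemma lattice_affine_hull_translate_of_int:
  assumes "x0 \<in> lattice_affine_hull P" "x0 + g \<in> lattice_affine_hull P"
  shows "x0 + of_int n *\<^sub>R g \<in> lattice_affine_hull P"
proof (cases n rule: int_cases2)
  case (nonneg m)
  then show ?thesis using lattice_affine_hull_translate_of_nat[OF assms, of m] by simp
next
  case (nonpos m)
  then show ?thesis
    using lattice_affine_hull_affine[OF assms(1) assms(1)
        lattice_affine_hull_translate_of_nat[OF assms, of m]]
    by (simp add: algebra_simps)
qed

lemma lattice_affine_hull_translate_int_comb: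
  assumes "finite W" "x0 \<in> lattice_affine_hull P"
    and "\<And>w. w \<in> W \<Longrightarrow> x0 + w \<in> lattice_affine_hull P"
  shows "x0 + (\<Sum>w\<in>W. of_int (n w) *\<^sub>R w) \<in> lattice_affine_hull P"
  using assms(1,3)
proof (induction W rule: finite_induct)
  case empty
  then show ?case using assms(2) by simp
next
  case (insert w W)
  then show ?case
    using lattice_affine_hull_translate_add[OF assms(2)
        lattice_affine_hull_translate_of_int[OF assms(2)] insert.IH]
    by simp
qed

lemma convex_dilated_simplex_subset:
  fixes x0 :: "'a::real_vector"
  assumes "convex P" "x0 \<in> P" "finite W" "k > 0" "\<And>w. w \<in> W \<Longrightarrow> x0 + k *\<^sub>R w \<in> P"
    and "\<forall>w\<in>W. 0 \<le> l w" "sum l W \<le> k"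
  shows "x0 + (\<Sum>w\<in>W. l w *\<^sub>R w) \<in> P"
proof (cases "sum l W = 0")
  case True
  then have "\<forall>w\<in>W. l w = 0" using sum_nonneg_eq_0_iff[OF assms(3)] assms(6) by blast
  then show ?thesis using assms(2) by simp
next
  case False
  define s where "s = sum l W"
  have s: "s > 0" using False assms(6) sum_nonneg[of W l] unfolding s_def by force
  have weights: "(\<Sum>w\<in>W. l w / s) = 1" using s by (simp add: s_def flip: sum_divide_distrib)
  have "(\<Sum>w\<in>W. (l w / s) *\<^sub>R (x0 + k *\<^sub>R w)) \<in> P"
    using assms(1,3,5,6) s weights by (intro convex_sum) auto
  moreover have "(\<Sum>w\<in>W. (l w / s) *\<^sub>R (x0 + k *\<^sub>R w)) = x0 + (k / s) *\<^sub>R (\<Sum>w\<in>W. l w *\<^sub>R w)"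
    using weights
    by (simp add: scaleR_add_right sum.distrib scaleR_right.sum mult.commute
        flip: scaleR_sum_left)
  ultimately have far: "x0 + (k / s) *\<^sub>R (\<Sum>w\<in>W. l w *\<^sub>R w) \<in> P" by simp
  have "(1 - s/k) *\<^sub>R x0 + (s/k) *\<^sub>R (x0 + (k / s) *\<^sub>R (\<Sum>w\<in>W. l w *\<^sub>R w)) \<in> P"
    using assms(4,7) s by (intro convexD[OF assms(1,2) far]) (auto simp: s_def)
  then show ?thesis using s assms(4) by (simp add: scaleR_add_right scaleR_diff_left)
qed

lemma spanning_if_lattice_affine_hull_covers_parallelepiped:
  fixes P :: "(real^'n) set"
  assumes W: "finite W" "W \<subseteq> lattice" "span W = UNIV" and "x0 \<in> lattice"
    and x0_H: "x0 \<in> lattice_affine_hull P"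
    and W_H: "\<And>w. w \<in> W \<Longrightarrow> x0 + w \<in> lattice_affine_hull P"
    and fractional_H: "\<And>l. (\<And>w. 0 \<le> l w \<and> l w \<le> 1) \<Longrightarrow> (\<Sum>w\<in>W. l w *\<^sub>R w) \<in> lattice
      \<Longrightarrow> x0 + (\<Sum>w\<in>W. l w *\<^sub>R w) \<in> lattice_affine_hull P"
  shows "spanning P"
proof -
  let ?H = "lattice_affine_hull P"
  have lattice_H: "x0 + y \<in> ?H" if y: "y \<in> lattice" for y
  proof -
    have "y \<in> range (\<lambda>u. \<Sum>w\<in>W. u w *\<^sub>R w)" using W(3) span_finite[OF W(1)] by simp
    then obtain u where u: "(\<Sum>w\<in>W. u w *\<^sub>R w) = y" by blast
    define l where "l w = u w - \<lfloor>u w\<rfloor>" for w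
    have y_split: "y = (\<Sum>w\<in>W. l w *\<^sub>R w) + (\<Sum>w\<in>W. of_int \<lfloor>u w\<rfloor> *\<^sub>R w)"
      unfolding u[symmetric] l_def by (simp add: scaleR_left_diff_distrib sum_subtractf)
    have "(\<Sum>w\<in>W. of_int \<lfloor>u w\<rfloor> *\<^sub>R w) \<in> lattice"
      using W(2) by (intro lattice_sum lattice_scaleR_of_int) auto
    from lattice_diff[OF y this] have "(\<Sum>w\<in>W. l w *\<^sub>R w) \<in> lattice"
      by (simp add: y_split)
    moreover have "0 \<le> l w \<and> l w \<le> 1" for w unfolding l_def by linarith
    ultimately have "x0 + (\<Sum>w\<in>W. l w *\<^sub>R w) \<in> ?H" using fractional_H by blast
    from lattice_affine_hull_translate_add[OF x0_H this
        lattice_affine_hull_translate_int_comb[OF W(1) x0_H W_H]]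
    show ?thesis unfolding y_split .
  qed
  have "z \<in> ?H" if "z \<in> lattice" for z
    using lattice_H[OF lattice_diff[OF that \<open>x0 \<in> lattice\<close>]] by simp
  then show ?thesis unfolding spanning_iff_lattice_subset by blast
qed

lemma spanning_if_dilated_lattice_simplex:
  fixes P :: "(real^'n) set"
  assumes P: "convex P" "x0 \<in> P" "x0 \<in> lattice"
    and W: "finite W" "W \<subseteq> lattice" "span W = UNIV" "real (card W) \<le> 2 * k"
    and k: "1 \<le> k" and simplex: "\<And>w. w \<in> W \<Longrightarrow> x0 + k *\<^sub>R w \<in> P"
  shows "spanning P"
proof -
  let ?H = "lattice_affine_hull P"
  have in_P: "x0 + (\<Sum>w\<in>W. l w *\<^sub>R w) \<in> P" if "\<forall>w\<in>W. 0 \<le> l w" "sum l W \<le> k" for l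
    using convex_dilated_simplex_subset[OF P(1,2) W(1) _ simplex] k that by auto
  have in_H: "x0 + v \<in> ?H" if "v \<in> lattice" "x0 + v \<in> P" for v
    using lattice_affine_hull_base[OF that(2) lattice_add[OF P(3) that(1)]] .
  have x0_H: "x0 \<in> ?H" using lattice_affine_hull_base[OF P(2,3)] .
  have W_H: "x0 + w \<in> ?H" if "w \<in> W" for w
  proof -
    have "(1 - 1/k) *\<^sub>R x0 + (1/k) *\<^sub>R (x0 + k *\<^sub>R w) \<in> P"
      using k by (intro convexD[OF P(1,2) simplex[OF that]]) auto
    then have "x0 + w \<in> P" using k by (simp add: algebra_simps)
    then show ?thesis using in_H W(2) that by auto
  qed
  have fractional_H: "x0 + (\<Sum>w\<in>W. l w *\<^sub>R w) \<in> ?H"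
    if l: "\<And>w. 0 \<le> l w \<and> l w \<le> 1" and lattice: "(\<Sum>w\<in>W. l w *\<^sub>R w) \<in> lattice" for l
  proof (cases "sum l W \<le> k")
    case True
    then have "x0 + (\<Sum>w\<in>W. l w *\<^sub>R w) \<in> P" using in_P l by auto
    then show ?thesis by (rule in_H[OF lattice])
  next
    case False
    \<comment> \<open>Reflect through the centre of the parallelepiped spanned by \<open>W\<close>.\<close>
    let ?ones = "\<Sum>w\<in>W. of_int 1 *\<^sub>R w"
    have "sum (\<lambda>w. 1 - l w) W \<le> k" using False W(4) by (simp add: sum_subtractf)
    then have "x0 + (\<Sum>w\<in>W. (1 - l w) *\<^sub>R w) \<in> P" using in_P l by auto
    moreover have "(\<Sum>w\<in>W. (1 - l w) *\<^sub>R w) = ?ones - (\<Sum>w\<in>W. l w *\<^sub>R w)"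
      by (simp add: scaleR_left_diff_distrib sum_subtractf)
    moreover have "?ones \<in> lattice" using W(2) by (auto intro!: lattice_sum)
    ultimately have "x0 + (?ones - (\<Sum>w\<in>W. l w *\<^sub>R w)) \<in> ?H"
      using in_H[OF lattice_diff[OF _ lattice]] by simp
    from lattice_affine_hull_translate_diff[OF x0_H
        lattice_affine_hull_translate_int_comb[OF W(1) x0_H W_H, of "\<lambda>_. 1"] this]
    show ?thesis by simp
  qed
  show ?thesis
    using spanning_if_lattice_affine_hull_covers_parallelepiped[OF W(1-3) P(3) x0_H W_H fractional_H] .
qed

definition directional_width :: "real^'n \<Rightarrow> (real^'n) set \<Rightarrow> real" where
  "directional_width u K = Sup {\<bar>u \<bullet> x - u \<bullet> y\<bar> | x y. x \<in> K \<and> y \<in> K}"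

lemma lattice_width_eq_Inf_directional_width:
  "lattice_width K = Inf {directional_width u K | u. u \<in> lattice \<and> u \<noteq> 0}"
  by (simp add: lattice_width_def directional_width_def)

lemma bdd_above_directional_diffs:
  fixes K :: "(real^'n) set"
  assumes "bounded K"
  shows "bdd_above {\<bar>u \<bullet> x - u \<bullet> y\<bar> | x y. x \<in> K \<and> y \<in> K}"
proof -
  obtain B where B: "\<forall>x\<in>K. norm x \<le> B" using assms bounded_iff by blast
  have "\<bar>u \<bullet> x - u \<bullet> y\<bar> \<le> norm u * (2 * B)" if "x \<in> K" "y \<in> K" for x y
  proof -
    have "norm (x - y) \<le> 2 * B"
      using B that norm_triangle_ineq4[of x y] by (smt (verit, best))
    then have "norm u * norm (x - y) \<le> norm u * (2 * B)" by (simp add: mult_left_mono)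
    then show ?thesis
      using Cauchy_Schwarz_ineq2[of u "x - y"] by (simp add: inner_diff_right)
  qed
  then show ?thesis unfolding bdd_above_def by blast
qed

lemma directional_width_upper:
  "bounded K \<Longrightarrow> x \<in> K \<Longrightarrow> y \<in> K \<Longrightarrow> \<bar>u \<bullet> x - u \<bullet> y\<bar> \<le> directional_width u K"
  unfolding directional_width_def by (rule cSup_upper) (auto intro: bdd_above_directional_diffs)

lemma lattice_width_le_directional_width:
  assumes "bounded K" "K \<noteq> {}" "u \<in> lattice" "u \<noteq> 0"
  shows "lattice_width K \<le> directional_width u K"
proof -
  have "0 \<le> directional_width v K" for v
    using assms(2) directional_width_upper[OF assms(1), of _ _ v] by fastforce
  then show ?thesis
    unfolding lattice_width_eq_Inf_directional_width
    by (intro cInf_lower) (use assms(3,4) in \<open>auto simp: bdd_below_def\<close>)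
qed

lemma lattice_width_greatest:
  assumes "\<And>u. u \<in> lattice \<Longrightarrow> u \<noteq> 0 \<Longrightarrow> c \<le> directional_width u K"
  shows "c \<le> lattice_width K"
  unfolding lattice_width_eq_Inf_directional_width
  using lattice_has_nonzero assms by (intro cInf_greatest) auto

lemma directional_width_homothety_ge:
  fixes K :: "(real^'n) set"
  assumes "t > 0" "bounded K" "K \<noteq> {}"
  shows "t * directional_width u K \<le> directional_width u ((\<lambda>x. a + t *\<^sub>R x) ` K)"
proof -
  have bounded_image: "bounded ((\<lambda>x. a + t *\<^sub>R x) ` K)"
    using assms(2) by (metis bounded_scaling bounded_translation image_image)
  have "\<bar>u \<bullet> x - u \<bullet> y\<bar> \<le> directional_width u ((\<lambda>x. a + t *\<^sub>R x) ` K) / t"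
    if "x \<in> K" "y \<in> K" for x y
  proof -
    have "\<bar>u \<bullet> (a + t *\<^sub>R x) - u \<bullet> (a + t *\<^sub>R y)\<bar> = t * \<bar>u \<bullet> x - u \<bullet> y\<bar>"
      using assms(1) by (simp add: inner_add_right abs_mult flip: right_diff_distrib)
    moreover have "\<bar>u \<bullet> (a + t *\<^sub>R x) - u \<bullet> (a + t *\<^sub>R y)\<bar>
        \<le> directional_width u ((\<lambda>x. a + t *\<^sub>R x) ` K)"
      using that by (intro directional_width_upper[OF bounded_image]) auto
    ultimately show ?thesis using assms(1) by (simp add: field_simps)
  qed
  then have "directional_width u K \<le> directional_width u ((\<lambda>x. a + t *\<^sub>R x) ` K) / t"
    unfolding directional_width_def[of u K] using assms(3) by (intro cSup_least) blast+
  then show ?thesis using assms(1) by (simp add: field_simps)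
qed

lemma lattice_width_homothety_ge:
  fixes K :: "(real^'n) set"
  assumes "t > 0" "bounded K" "K \<noteq> {}"
  shows "t * lattice_width K \<le> lattice_width ((\<lambda>x. a + t *\<^sub>R x) ` K)"
proof (rule lattice_width_greatest)
  fix u :: "real^'n" assume "u \<in> lattice" "u \<noteq> 0"
  then have "t * lattice_width K \<le> t * directional_width u K"
    using assms by (simp add: lattice_width_le_directional_width)
  also have "\<dots> \<le> directional_width u ((\<lambda>x. a + t *\<^sub>R x) ` K)"
    using directional_width_homothety_ge[OF assms] .
  finally show "t * lattice_width K \<le> directional_width u ((\<lambda>x. a + t *\<^sub>R x) ` K)" .
qed

lemma lattice_width_le_Flt:
  fixes K :: "(real^'n) set"
  assumes "K \<noteq> {}" "compact K" "convex K" "K \<inter> lattice = {}"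
  shows "ereal (lattice_width K) \<le> Flt TYPE('n)"
  unfolding Flt_def by (rule Sup_upper) (use assms in blast)

lemma Flt_ge_half: "ereal (1/2) \<le> Flt TYPE('n::finite)"
proof -
  define K :: "(real^'n) set" where "K = cball (\<chi> i. 1/2) (1/4)"
  have "K \<inter> lattice = {}"
  proof (rule ccontr)
    assume "K \<inter> lattice \<noteq> {}"
    then obtain x where x: "x \<in> K" "x \<in> lattice" by blast
    obtain i :: 'n where True by simp
    have "\<bar>(x - (\<chi> i. 1/2)) $ i\<bar> \<le> 1/4"
      using component_le_norm_cart[of "x - (\<chi> i. 1/2)" i] x(1)
      by (simp add: K_def dist_norm norm_minus_commute)
    moreover obtain m :: int where "x $ i = of_int m"
      using x(2) by (auto simp: lattice_def elim: Ints_cases)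
    moreover have "real_of_int m \<le> 0 \<or> real_of_int m \<ge> 1" by (cases "m \<le> 0") auto
    ultimately show False by auto
  qed
  moreover have "1/2 \<le> lattice_width K"
  proof (rule lattice_width_greatest)
    fix u :: "real^'n" assume "u \<in> lattice" "u \<noteq> 0"
    then have u: "1 \<le> norm u" by (rule lattice_nonzero_norm_ge_1)
    define e where "e = (1/4 / norm u) *\<^sub>R u"
    have "\<bar>u \<bullet> ((\<chi> i. 1/2) + e) - u \<bullet> ((\<chi> i. 1/2) - e)\<bar> = norm u / 2"
      using u by (simp add: e_def inner_add_right inner_diff_right dot_square_norm power2_eq_square)
    moreover have "\<bar>u \<bullet> ((\<chi> i. 1/2) + e) - u \<bullet> ((\<chi> i. 1/2) - e)\<bar> \<le> directional_width u K"
      using u by (intro directional_width_upper) (auto simp: K_def e_def dist_norm)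
    ultimately show "1/2 \<le> directional_width u K" using u by linarith
  qed
  moreover have "ereal (lattice_width K) \<le> Flt TYPE('n)"
    using calculation(1) by (intro lattice_width_le_Flt) (auto simp: K_def)
  ultimately show ?thesis by (meson ereal_less_eq(3) order_trans)
qed

lemma lattice_width_bound_from_degenerate_direction:
  fixes P :: "(real^'n) set"
  assumes P: "compact P" "convex P" "x0 \<in> P" and k: "k > 0" and f: "Flt TYPE('n) = ereal f"
    and g_degenerate: "\<And>z. z \<in> lattice \<Longrightarrow> x0 + k *\<^sub>R z \<in> P \<Longrightarrow> g \<bullet> z = 0"
    and p: "p \<in> P" "\<And>x. x \<in> P \<Longrightarrow> g \<bullet> x \<le> g \<bullet> p"
    and q: "q \<in> P" "\<And>x. x \<in> P \<Longrightarrow> g \<bullet> q \<le> g \<bullet> x"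
    and "g \<bullet> q < g \<bullet> p" and lower_half: "2 * (g \<bullet> x0) \<le> g \<bullet> p + g \<bullet> q"
  shows "3 * lattice_width P \<le> 8 * k * f"
proof -
  define t where "t = 3 / (8 * k)"
  define a where "a = (5 / (8 * k)) *\<^sub>R p - (1 / k) *\<^sub>R x0"
  define K where "K = (\<lambda>x. a + t *\<^sub>R x) ` P"
  \<comment> \<open>For \<open>z \<in> K\<close> the point \<open>x0 + k z\<close> lies strictly above \<open>x0\<close> in direction \<open>g\<close>, so \<open>g \<bullet> z \<noteq> 0\<close>.\<close>
  have shift: "x0 + k *\<^sub>R (a + t *\<^sub>R x) = (5/8) *\<^sub>R p + (3/8) *\<^sub>R x" for x
    using k by (simp add: a_def t_def scaleR_add_right scaleR_diff_right)
  have "K \<inter> lattice = {}"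
  proof (rule ccontr)
    assume "K \<inter> lattice \<noteq> {}"
    then obtain x where x: "x \<in> P" "a + t *\<^sub>R x \<in> lattice" by (auto simp: K_def)
    have "x0 + k *\<^sub>R (a + t *\<^sub>R x) \<in> P"
      unfolding shift by (rule convexD[OF P(2) p(1) x(1)]) auto
    then have "g \<bullet> (x0 + k *\<^sub>R (a + t *\<^sub>R x)) = g \<bullet> x0"
      using g_degenerate[OF x(2)] by (simp add: inner_add_right)
    moreover have "g \<bullet> ((5/8) *\<^sub>R p + (3/8) *\<^sub>R x) = (5/8) * (g \<bullet> p) + (3/8) * (g \<bullet> x)"
      by (simp add: inner_add_right)
    ultimately show False
      using q(2)[OF x(1)] \<open>g \<bullet> q < g \<bullet> p\<close> lower_half unfolding shift by linarith
  qed
  moreover have "K \<noteq> {}" "compact K" "convex K"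
    using P unfolding K_def
    by (auto simp flip: image_image[of "(+) a" "\<lambda>x. t *\<^sub>R x"]
        intro: compact_translation compact_scaling convex_translation convex_scaling)
  ultimately have "lattice_width K \<le> f"
    using lattice_width_le_Flt[of K] f by simp
  moreover have "t * lattice_width P \<le> lattice_width K"
    unfolding K_def using k P by (intro lattice_width_homothety_ge) (auto simp: t_def compact_imp_bounded)
  ultimately have "t * lattice_width P \<le> f" by linarith
  then show ?thesis using k by (simp add: t_def field_simps)
qed

lemma span_lattice_points_of_dilate:
  fixes P :: "(real^'n) set"
  assumes P: "compact P" "convex P" "x0 \<in> P" "aff_dim P = int CARD('n)"
    and k: "k > 0" and f: "Flt TYPE('n) = ereal f" and wide: "8 * k * f < 3 * lattice_width P"
  shows "span {z \<in> lattice. x0 + k *\<^sub>R z \<in> P} = UNIV"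
proof (rule ccontr)
  assume "span {z \<in> lattice. x0 + k *\<^sub>R z \<in> P} \<noteq> UNIV"
  then obtain h :: "real^'n" where h: "h \<noteq> 0" "span {z \<in> lattice. x0 + k *\<^sub>R z \<in> P} \<subseteq> {x. h \<bullet> x = 0}"
    using span_not_univ_subset_hyperplane by blast
  have h_degenerate: "h \<bullet> z = 0" if "z \<in> lattice" "x0 + k *\<^sub>R z \<in> P" for z
    using h(2) span_base[of z "{z \<in> lattice. x0 + k *\<^sub>R z \<in> P}"] that by auto
  have "continuous_on P (\<lambda>x. h \<bullet> x)" by (intro continuous_intros)
  then obtain p q where p: "p \<in> P" "\<And>x. x \<in> P \<Longrightarrow> h \<bullet> x \<le> h \<bullet> p"
    and q: "q \<in> P" "\<And>x. x \<in> P \<Longrightarrow> h \<bullet> q \<le> h \<bullet> x"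
    using continuous_attains_sup[OF P(1) _] continuous_attains_inf[OF P(1) _] P(3) by blast
  have "h \<bullet> q < h \<bullet> p"
  proof (rule ccontr)
    assume "\<not> h \<bullet> q < h \<bullet> p"
    then have "P \<subseteq> {x. h \<bullet> x = h \<bullet> q}" using p(2) q(2) by fastforce
    then have "aff_dim P \<le> aff_dim {x. h \<bullet> x = h \<bullet> q}" by (rule aff_dim_subset)
    then show False using P(4) h(1) by simp
  qed
  then have "3 * lattice_width P \<le> 8 * k * f"
  proof (cases "2 * (h \<bullet> x0) \<le> h \<bullet> p + h \<bullet> q")
    case True
    show ?thesis
      by (rule lattice_width_bound_from_degenerate_direction[OF P(1-3) k f h_degenerate p q])
        (use \<open>h \<bullet> q < h \<bullet> p\<close> True in auto)
  next
    case False
    show ?thesis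
      by (rule lattice_width_bound_from_degenerate_direction[OF P(1-3) k f, of "- h" q p])
        (use h_degenerate p q \<open>h \<bullet> q < h \<bullet> p\<close> False in auto)
  qed
  then show False using wide by linarith
qed

lemma spanning_if_wide:
  fixes P :: "(real^'n) set"
  assumes P: "compact P" "convex P" "x0 \<in> P" "x0 \<in> lattice" "aff_dim P = int CARD('n)"
    and d: "2 \<le> CARD('n)" and f: "Flt TYPE('n) = ereal f"
    and wide: "2 * f * real CARD('n) \<le> lattice_width P"
  shows "spanning P"
proof -
  define k where "k = real CARD('n) / 2"
  have "1/2 \<le> f" using Flt_ge_half[where 'n='n] f by simp
  then have "0 < f * real CARD('n)" by simp
  then have "8 * k * f < 3 * lattice_width P" using wide by (simp add: k_def algebra_simps)
  then have span: "span {z \<in> lattice. x0 + k *\<^sub>R z \<in> P} = UNIV"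
    using d by (intro span_lattice_points_of_dilate[OF P(1,2,3,5) _ f]) (auto simp: k_def)
  obtain W where W: "W \<subseteq> {z \<in> lattice. x0 + k *\<^sub>R z \<in> P}" "independent W"
      "{z \<in> lattice. x0 + k *\<^sub>R z \<in> P} \<subseteq> span W"
    using maximal_independent_subset by blast
  have "span W = UNIV" using span W(3) span_mono[OF W(3)] by (simp add: span_span top_unique)
  moreover have "card W = CARD('n)"
    using dim_eq_card_independent[OF W(2)] dim_span[of W] calculation by simp
  ultimately show ?thesis
    using W(1,2) d
    by (intro spanning_if_dilated_lattice_simplex[OF P(2,3,4), of W k])
      (auto simp: k_def finiteI_independent)
qed

lemma spanning_if_dim_one:
  fixes P :: "(real^'n) set"
  assumes d: "CARD('n) = 1" and P: "convex P" "x0 \<in> P" "x0 \<in> lattice" "x1 \<in> P" "x1 \<in> lattice"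
    and "x0 \<noteq> x1"
  shows "spanning P"
proof (rule spanning_if_dilated_lattice_simplex[OF P(1-3), of "{x1 - x0}" 1])
  have "dim {x1 - x0} = DIM(real^'n)"
    using dim_eq_card_independent[of "{x1 - x0}"] d \<open>x0 \<noteq> x1\<close> by simp
  then show "span {x1 - x0} = UNIV" using dim_eq_full by blast
qed (use P \<open>x0 \<noteq> x1\<close> in \<open>auto intro: lattice_diff\<close>)

theorem corollary2p5:
  fixes P :: "(real^'n) set"
  assumes "lattice_polytope P"
    and "aff_dim P = int CARD('n)"
    and "ereal (lattice_width P) \<ge> 2 * Flt TYPE('n) * ereal (real CARD('n))"
  shows "spanning P"
proof -
  obtain S where S: "finite S" "S \<subseteq> lattice" "P = convex hull S"
    using assms(1) unfolding lattice_polytope_def by blast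
  have P: "compact P" "convex P" "S \<subseteq> P"
    using S by (auto simp: finite_imp_compact_convex_hull hull_subset)
  obtain x0 where x0: "x0 \<in> S" using assms(2) S(3) by fastforce
  show ?thesis
  proof (cases "CARD('n) = 1")
    case True
    have "\<not> S \<subseteq> {x0}"
    proof
      assume "S \<subseteq> {x0}"
      then have "P \<subseteq> {x0}" using S(3) by (simp add: hull_minimal)
      then show False using aff_dim_subset[of P "{x0}"] assms(2) by simp
    qed
    then obtain x1 where "x1 \<in> S" "x1 \<noteq> x0" by blast
    then show ?thesis using spanning_if_dim_one[OF True P(2)] x0 S(2) P(3) by blast
  next
    case False
    have "Flt TYPE('n) \<noteq> \<infinity>" using assms(3) by (auto simp: ereal_mult_infty)
    then obtain f where f: "Flt TYPE('n) = ereal f"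
      using Flt_ge_half[where 'n='n] by (cases "Flt TYPE('n)") auto
    have "2 * f * real CARD('n) \<le> lattice_width P" using assms(3) by (simp add: f)
    moreover have "2 \<le> CARD('n)" using False zero_less_card_finite[where 'a='n] by linarith
    ultimately show ?thesis
      using spanning_if_wide[OF P(1,2) _ _ assms(2) _ f] x0 S(2) P(3) by blast
  qed
qed

end
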